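(* Let $Y$ be a second countable locally compact connected Abelian group with character group $X$. Let $h$ be a real-valued characteristic function on $Y$ satisfying $h(2y)=2h^2(y)-1$ for all $y\in Y$. Then there is $x_0\in X$ such that $h(y)=\operatorname{Re}\,(x_0,y)$ for all $y\in Y$.
   Context: A function $h$ on $Y$ is a characteristic function if there is a probability distribution $\mu$ on $X$ with $h(y)=\int_X (x,y)\,d\mu(x)$ for all $y\in Y$, where $(x,y)$ is the value of the character $y$ at $x$ (equivalently of $x$ at $y$ under Pontryagin duality). *)

theory Defs
  imports "HOL-Analysis.Analysis" "HOL-Probability.Probability"
begin

definition topological_ab_group :: "('y::{topological_space, ab_group_add}) itself \<Rightarrow> bool" where
  "topological_ab_group _ \<longleftrightarrow>
     continuous_on UNIV (\<lambda>p::'y \<times> 'y. fst p + snd p) \<and> continuous_on UNIV (\<lambda>y::'y. - y)"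

definition characters :: "('y::{topological_space, ab_group_add} \<Rightarrow> complex) set" where
  "characters = {x. continuous_on UNIV x \<and> (\<forall>y. cmod (x y) = 1) \<and>
                    (\<forall>a b. x (a + b) = x a * x b)}"

definition compact_open :: "('a::topological_space \<Rightarrow> 'b::topological_space) set \<Rightarrow> ('a \<Rightarrow> 'b) topology" where
  "compact_open S = topology_generated_by {{f \<in> S. f ` K \<subseteq> U} | K U. compact K \<and> open U}"

definition borel_space_of :: "'a topology \<Rightarrow> 'a measure" where
  "borel_space_of T = sigma (topspace T) {U. openin T U}"

definition character_group :: "('y::{topological_space, ab_group_add} \<Rightarrow> complex) topology" where
  "character_group = compact_open characters"

definition characteristic_function :: "('y::{topological_space, ab_group_add} \<Rightarrow> complex) \<Rightarrow> bool" where
  "characteristic_function h \<longleftrightarrow>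
     (\<exists>\<mu>. prob_space \<mu> \<and> sets \<mu> = sets (borel_space_of (character_group :: ('y \<Rightarrow> complex) topology))
          \<and> space \<mu> = characters
          \<and> (\<forall>y. h y = (\<integral>x. x y \<partial>\<mu>)))"

end

theory Submission
  imports Defs
begin

(* For a character x with |x| = 1, Re x(2y) = 2 (Re x(y))^2 - 1. Integrating against the
   representing measure mu and using h(2y) = 2 h(y)^2 - 1 shows that the second moment of
   x |-> Re x(y) equals the square of its mean h(y), so its variance vanishes: Re x(y) = h(y)
   for mu-almost every x. Intersecting these full-measure sets over a countable dense set
   of y gives a character x0 with Re x0 = h on that dense set, and continuity of characters
   (compared with a second good character at any given y) extends this to all of Y. *)

lemma topspace_compact_open [simp]: "topspace (compact_open S) = S"
proof -
  have "S \<in> {{f \<in> S. f ` K \<subseteq> U} | K U. compact K \<and> open U}"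
    by (intro CollectI exI[of _ "{}"] exI[of _ UNIV]) simp
  then show ?thesis
    unfolding compact_open_def by auto
qed

lemma openin_compact_open_evaluation:
  assumes "open U"
  shows "openin (compact_open S) {f \<in> S. f y \<in> U}"
  unfolding compact_open_def
  by (rule topology_generated_by_Basis, intro CollectI exI[of _ "{y}"] exI[of _ U]) (simp add: assms)

lemma openin_in_sets_borel_space_of:
  assumes "openin T U"
  shows "U \<in> sets (borel_space_of T)"
proof -
  have "Collect (openin T) \<subseteq> Pow (topspace T)"
    using openin_subset by auto
  then show ?thesis
    unfolding borel_space_of_def using assms by (simp add: sigma_sets.Basic)
qed

lemma space_borel_space_of [simp]: "space (borel_space_of T) = topspace T"
  unfolding borel_space_of_def by (simp add: openin_subset space_measure_of_conv subset_Pow_Union)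

lemma measurable_evaluation_compact_open:
  assumes sets_M: "sets M = sets (borel_space_of (compact_open S))"
  shows "(\<lambda>f. f y) \<in> borel_measurable M"
proof (rule borel_measurableI)
  fix U :: "'b set"
  assume "open U"
  have "space M = S"
    using sets_eq_imp_space_eq[OF sets_M] by simp
  then have "(\<lambda>f. f y) -` U \<inter> space M = {f \<in> S. f y \<in> U}"
    by auto
  moreover have "{f \<in> S. f y \<in> U} \<in> sets (borel_space_of (compact_open S))"
    using \<open>open U\<close> by (intro openin_in_sets_borel_space_of openin_compact_open_evaluation)
  ultimately show "(\<lambda>f. f y) -` U \<inter> space M \<in> sets M"
    using sets_M by simp
qed

lemma Re_mult_self_of_unit_modulus:
  assumes "cmod z = 1"
  shows "Re (z * z) = 2 * (Re z)\<^sup>2 - 1"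
  using assms by (simp add: cmod_def power2_eq_square)

lemma (in prob_space) AE_eq_expectation_if_second_moment_eq:
  fixes X :: "'a \<Rightarrow> real"
  assumes "integrable M X" "integrable M (\<lambda>x. (X x)\<^sup>2)"
    and "expectation (\<lambda>x. (X x)\<^sup>2) = (expectation X)\<^sup>2"
  shows "AE x in M. X x = expectation X"
proof -
  have "variance X = 0"
    using assms by (simp add: variance_eq)
  moreover have "integrable M (\<lambda>x. (X x - expectation X)\<^sup>2)"
    using assms by (simp add: power2_diff)
  ultimately have "AE x in M. (X x - expectation X)\<^sup>2 = 0"
    by (simp add: integral_nonneg_eq_0_iff_AE)
  then show ?thesis
    by eventually_elim simp
qed

lemma (in prob_space) AE_pointwise_imp_ex_continuous_eq:
  fixes F :: "'a \<Rightarrow> 'y::second_countable_topology \<Rightarrow> 'b::t2_space"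
  assumes cont: "\<And>x. x \<in> space M \<Longrightarrow> continuous_on UNIV (F x)"
    and AE_eq: "\<And>y. AE x in M. F x y = g y"
  shows "\<exists>x\<in>space M. \<forall>y. F x y = g y"
proof -
  obtain D :: "'y set" where "countable D" and dense: "\<And>U. open U \<Longrightarrow> U \<noteq> {} \<Longrightarrow> \<exists>d\<in>D. d \<in> U"
    using countable_dense_setE by blast
  have AE_D: "AE x in M. x \<in> space M \<and> (\<forall>d\<in>D. F x d = g d)"
    using \<open>countable D\<close> AE_eq by (simp add: AE_ball_countable AE_space)
  then obtain x0 where x0: "x0 \<in> space M" "\<forall>d\<in>D. F x0 d = g d"
    using eventually_happens'[OF ae_filter_bot] by blast
  have "F x0 y = g y" for y
  proof -
    have "AE x in M. (x \<in> space M \<and> (\<forall>d\<in>D. F x d = g d)) \<and> F x y = g y"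
      using AE_D AE_eq[of y] by eventually_elim simp
    then obtain x1 where x1: "x1 \<in> space M" "\<forall>d\<in>D. F x1 d = g d" "F x1 y = g y"
      using eventually_happens'[OF ae_filter_bot] by blast
    have "open {z. F x0 z \<noteq> F x1 z}"
      using cont x0(1) x1(1) by (intro open_Collect_neq) auto
    then have "{z. F x0 z \<noteq> F x1 z} = {}"
      using dense x0(2) x1(2) by fastforce
    then show ?thesis
      using x1(3) by auto
  qed
  then show ?thesis
    using x0(1) by blast
qed

lemma Re_character_add_self:
  assumes "x \<in> characters"
  shows "Re (x (y + y)) = 2 * (Re (x y))\<^sup>2 - 1"
  using assms Re_mult_self_of_unit_modulus[of "x y"] unfolding characters_def by simp

lemma continuous_on_Re_character:
  assumes "x \<in> characters"
  shows "continuous_on UNIV (\<lambda>y. Re (x y))"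
  using assms unfolding characters_def by (auto intro: continuous_intros)

lemma AE_Re_character_eq_if_add_self:
  fixes h :: "'y::{topological_space, ab_group_add} \<Rightarrow> real"
  assumes "prob_space M"
    and sets_M: "sets M = sets (borel_space_of (character_group :: ('y \<Rightarrow> complex) topology))"
    and h_integral: "\<And>y. complex_of_real (h y) = (\<integral>x. x y \<partial>M)"
    and h_add_self: "\<And>y. h (y + y) = 2 * (h y)\<^sup>2 - 1"
  shows "AE x in M. Re (x y) = h y"
proof -
  interpret prob_space M by fact
  have space_M: "space M = characters"
    using sets_eq_imp_space_eq[OF sets_M] by (simp add: character_group_def)
  have [measurable]: "(\<lambda>x. x z) \<in> borel_measurable M" for z
    using sets_M unfolding character_group_def by (rule measurable_evaluation_compact_open)
  have unit: "cmod (x z) = 1" if "x \<in> space M" for x z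
    using that space_M unfolding characters_def by auto
  have integrable_eval: "integrable M (\<lambda>x. x z)" for z
    using unit by (intro integrable_const_bound[where B=1]) auto
  have integrable_Re_sq: "integrable M (\<lambda>x. (Re (x y))\<^sup>2)"
  proof (intro integrable_const_bound[where B=1] AE_I2)
    fix x assume "x \<in> space M"
    then show "norm ((Re (x y))\<^sup>2) \<le> 1"
      using abs_Re_le_cmod[of "x y"] unit by (simp add: abs_square_le_1)
  qed simp
  have h_eq: "h z = expectation (\<lambda>x. Re (x z))" for z
    using arg_cong[OF h_integral[of z], of Re] integrable_eval by simp
  have "2 * (h y)\<^sup>2 - 1 = expectation (\<lambda>x. Re (x (y + y)))"
    using h_add_self h_eq by simp
  also have "\<dots> = expectation (\<lambda>x. 2 * (Re (x y))\<^sup>2 - 1)"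
    using space_M by (intro Bochner_Integration.integral_cong refl) (simp add: Re_character_add_self)
  also have "\<dots> = 2 * expectation (\<lambda>x. (Re (x y))\<^sup>2) - 1"
    using integrable_Re_sq by (simp add: prob_space)
  finally have "expectation (\<lambda>x. (Re (x y))\<^sup>2) = (expectation (\<lambda>x. Re (x y)))\<^sup>2"
    using h_eq by simp
  then show ?thesis
    using AE_eq_expectation_if_second_moment_eq[OF _ integrable_Re_sq] integrable_eval h_eq by simp
qed

theorem corollary4p3:
  fixes h :: "'y::{t2_space, second_countable_topology, ab_group_add} \<Rightarrow> real"
  assumes "topological_ab_group TYPE('y)"
    and "locally_compact_space (euclidean :: 'y topology)"
    and "connected (UNIV :: 'y set)"
    and "characteristic_function (\<lambda>y. complex_of_real (h y))"
    and "\<And>y. h (y + y) = 2 * (h y)\<^sup>2 - 1"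
  shows "\<exists>x0 \<in> characters. \<forall>y. h y = Re (x0 y)"
proof -
  obtain \<mu> where "prob_space \<mu>"
    and sets_\<mu>: "sets \<mu> = sets (borel_space_of (character_group :: ('y \<Rightarrow> complex) topology))"
    and space_\<mu>: "space \<mu> = characters"
    and h_integral: "\<And>y. complex_of_real (h y) = (\<integral>x. x y \<partial>\<mu>)"
    using assms(4) unfolding characteristic_function_def by blast
  interpret prob_space \<mu> by fact
  have "AE x in \<mu>. Re (x y) = h y" for y
    using \<open>prob_space \<mu>\<close> sets_\<mu> h_integral assms(5)
    by (rule AE_Re_character_eq_if_add_self)
  then obtain x0 where "x0 \<in> characters" "\<forall>y. Re (x0 y) = h y"
    using AE_pointwise_imp_ex_continuous_eq[of "\<lambda>x y. Re (x y)" h]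
    by (auto simp: space_\<mu> continuous_on_Re_character)
  then show ?thesis
    by (metis (full_types))
qed

end
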